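(* Consider the stochastic epidemic model described in the context under the linear control policy $u(k)=K\,I(k)$, $k\ge0$, with a constant gain $K$. Suppose $$\overline{\delta}<\frac{(1-d_{\max})\,\overline{v}}{v_{\max}}\qquad\text{and}\qquad \frac{\overline{\delta}-\overline{d_I}}{\overline{v}}<K<\frac{1-d_{\max}}{v_{\max}}.$$ Then: (i) $\lim_{k\to\infty}\mathbb{E}[I(k)]/I_0=0$; (ii) $\mathbb{E}[I(k)]\le I_0$ for all $k\ge 0$; (iii) if $K=(\overline{\delta}-\overline{d_I})/\overline{v}$, then $\mathbb{E}[I(k)]=I_0$ for all $k$.
   Context: Time is indexed by days $k=0,1,2,\dots$. Let $(\delta(k))_{k\ge0}$, $(d_I(k))_{k\ge0}$, $(v(k))_{k\ge0}$ be three mutually independent sequences of random variables, each sequence i.i.d. in $k$, with $0\le \delta(k)\le \delta_{\max}$, $0\le d_I(k)\le d_{\max}$ where $d_{\max}<1$, and $0<v_{\min}\le v(k)\le v_{\max}\le 1$; moreover $\delta_{\max}$ lies in the support of $\delta(k)$, $d_{\max}$ in the support of $d_I(k)$, and $v_{\min},v_{\max}$ in the support of $v(k)$. Write $\overline{\delta}=\mathbb{E}[\delta(k)]$, $\overline{d_I}=\mathbb{E}[d_I(k)]$, $\overline{v}=\mathbb{E}[v(k)]$. Given a control sequence $u(k)\ge 0$, the susceptible, infected, recovered and deceased cases evolve by $S(k+1)=S(k)-\delta(k)I(k)$, $I(k+1)=(1+\delta(k))I(k)-v(k)u(k)-d_I(k)I(k)$, $R(k+1)=R(k)+v(k)u(k)$,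 $D(k+1)=D(k)+d_I(k)I(k)$, with initial values $S(0)=S_0$, $I(0)=I_0>0$, $R(0)=D(0)=0$, where $I_0\delta_{\max}<S_0$. *)

theory Defs
  imports "HOL-Probability.Probability"
begin

primrec sird ::
  "real \<Rightarrow> real \<Rightarrow> (nat \<Rightarrow> 'a \<Rightarrow> real) \<Rightarrow> (nat \<Rightarrow> 'a \<Rightarrow> real) \<Rightarrow> (nat \<Rightarrow> 'a \<Rightarrow> real)
   \<Rightarrow> (real \<times> real \<times> real \<times> real \<Rightarrow> real) \<Rightarrow> nat \<Rightarrow> 'a \<Rightarrow> real \<times> real \<times> real \<times> real" where
  "sird S0 I0 \<delta> dI v pol 0 \<omega> = (S0, I0, 0, 0)"
| "sird S0 I0 \<delta> dI v pol (Suc k) \<omega> =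
     (case sird S0 I0 \<delta> dI v pol k \<omega> of (S, I, R, D) \<Rightarrow>
        (let u = pol (S, I, R, D) in
          (S - \<delta> k \<omega> * I,
           (1 + \<delta> k \<omega>) * I - v k \<omega> * u - dI k \<omega> * I,
           R + v k \<omega> * u,
           D + dI k \<omega> * I)))"

definition infected_lin ::
  "real \<Rightarrow> real \<Rightarrow> (nat \<Rightarrow> 'a \<Rightarrow> real) \<Rightarrow> (nat \<Rightarrow> 'a \<Rightarrow> real) \<Rightarrow> (nat \<Rightarrow> 'a \<Rightarrow> real)
   \<Rightarrow> real \<Rightarrow> nat \<Rightarrow> 'a \<Rightarrow> real" where
  "infected_lin S0 I0 \<delta> dI v K k \<omega> =
     fst (snd (sird S0 I0 \<delta> dI v (\<lambda>(S, I, R, D). K * I) k \<omega>))"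

definition joint_family ::
  "(nat \<Rightarrow> 'a \<Rightarrow> real) \<Rightarrow> (nat \<Rightarrow> 'a \<Rightarrow> real) \<Rightarrow> (nat \<Rightarrow> 'a \<Rightarrow> real) \<Rightarrow> nat \<times> nat \<Rightarrow> 'a \<Rightarrow> real" where
  "joint_family \<delta> dI v = (\<lambda>(j, k). if j = 0 then \<delta> k else if j = 1 then dI k else v k)"

definition in_support :: "'a measure \<Rightarrow> ('a \<Rightarrow> real) \<Rightarrow> real \<Rightarrow> bool" where
  "in_support M X x \<longleftrightarrow> (\<forall>e>0. measure M {\<omega> \<in> space M. \<bar>X \<omega> - x\<bar> < e} > 0)"

end

theory Submission
  imports Defs
begin

text \<open>Under the linear policy u = K I the infected population evolves multiplicatively,
  I(k+1) = g(k) I(k) with the daily growth factor g(k) = 1 + \<delta>(k) - K v(k) - d_I(k).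
  The factors are independent and identically distributed, so E[I(k)] = I_0 a^k with
  a = 1 + E \<delta> - K E v - E d_I. The bound K < (1 - d_max) / v_max makes a positive, and
  a < 1 resp. a = 1 is exactly the lower condition on K resp. its equality case.\<close>

definition daily_growth ::
  "(nat \<Rightarrow> 'a \<Rightarrow> real) \<Rightarrow> (nat \<Rightarrow> 'a \<Rightarrow> real) \<Rightarrow> (nat \<Rightarrow> 'a \<Rightarrow> real) \<Rightarrow> real \<Rightarrow> nat \<Rightarrow> 'a \<Rightarrow> real"
  where "daily_growth \<delta> dI v K j \<omega> = 1 + \<delta> j \<omega> - K * v j \<omega> - dI j \<omega>"

lemma infected_lin_eq_prod:
  "infected_lin S0 I0 \<delta> dI v K k \<omega> = I0 * (\<Prod>j<k. daily_growth \<delta> dI v K j \<omega>)"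
proof (induction k)
  case 0
  then show ?case by (simp add: infected_lin_def)
next
  case (Suc k)
  have "infected_lin S0 I0 \<delta> dI v K (Suc k) \<omega> =
      infected_lin S0 I0 \<delta> dI v K k \<omega> * daily_growth \<delta> dI v K k \<omega>"
    unfolding infected_lin_def daily_growth_def by (simp split: prod.split add: algebra_simps)
  then show ?case using Suc by simp
qed

lemma (in prob_space) indep_vars_daily_growth:
  assumes "indep_vars (\<lambda>_. borel) (joint_family \<delta> dI v) ({0, 1, 2} \<times> UNIV)"
  shows "indep_vars (\<lambda>_. borel) (daily_growth \<delta> dI v K) UNIV"
proof -
  define day where "day j = ({0, 1, 2} \<times> {j} :: (nat \<times> nat) set)" for j :: nat
  define growth where "growth j f = 1 + f (0, j) - K * f (2, j) - f (1, j)"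
    for j and f :: "nat \<times> nat \<Rightarrow> real"
  have "indep_vars (\<lambda>j. PiM (day j) (\<lambda>_. borel))
      (\<lambda>j \<omega>. restrict (\<lambda>i. joint_family \<delta> dI v i \<omega>) (day j)) UNIV"
    by (rule indep_vars_restrict[OF assms]) (auto simp: day_def disjoint_family_on_def)
  moreover have "growth j \<in> borel_measurable (PiM (day j) (\<lambda>_. borel))" for j
    unfolding growth_def day_def by measurable
  ultimately have "indep_vars (\<lambda>_. borel)
      (\<lambda>j \<omega>. growth j (restrict (\<lambda>i. joint_family \<delta> dI v i \<omega>) (day j))) UNIV"
    by (rule indep_vars_compose2)
  moreover have "(\<lambda>j \<omega>. growth j (restrict (\<lambda>i. joint_family \<delta> dI v i \<omega>) (day j))) =
      daily_growth \<delta> dI v K"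
    by (auto simp: growth_def day_def joint_family_def daily_growth_def fun_eq_iff)
  ultimately show ?thesis by simp
qed

lemma integral_eq_if_distr_eq:
  fixes X Y :: "'a \<Rightarrow> real"
  assumes "X \<in> borel_measurable M" "Y \<in> borel_measurable M"
    and "distr M borel X = distr M borel Y"
  shows "(\<integral>\<omega>. X \<omega> \<partial>M) = (\<integral>\<omega>. Y \<omega> \<partial>M)"
  using integral_distr[OF assms(1), of "\<lambda>x. x"] integral_distr[OF assms(2), of "\<lambda>x. x"] assms(3)
  by simp

lemma (in prob_space) expectation_within_bounds:
  fixes X :: "'a \<Rightarrow> real"
  assumes "X \<in> borel_measurable M" and "\<And>\<omega>. \<omega> \<in> space M \<Longrightarrow> a \<le> X \<omega> \<and> X \<omega> \<le> b"
  shows "integrable M X" and "a \<le> expectation X" and "expectation X \<le> b"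
proof -
  have "\<bar>X \<omega>\<bar> \<le> max \<bar>a\<bar> \<bar>b\<bar>" if "\<omega> \<in> space M" for \<omega>
    using assms(2)[OF that] by linarith
  then show X: "integrable M X"
    by (intro integrable_const_bound[where B = "max \<bar>a\<bar> \<bar>b\<bar>"]) (auto simp: assms(1))
  show "a \<le> expectation X" by (rule integral_ge_const) (use X assms(2) in auto)
  show "expectation X \<le> b" by (rule integral_le_const) (use X assms(2) in auto)
qed

lemma (in prob_space) expectation_infected_lin:
  assumes "indep_vars (\<lambda>_. borel) (daily_growth \<delta> dI v K) UNIV"
    and "\<And>j. integrable M (daily_growth \<delta> dI v K j)"
    and "\<And>j. expectation (daily_growth \<delta> dI v K j) = a"
  shows "expectation (infected_lin S0 I0 \<delta> dI v K k) = I0 * a ^ k"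
proof -
  have "expectation (\<lambda>\<omega>. \<Prod>j<k. daily_growth \<delta> dI v K j \<omega>) =
      (\<Prod>j<k. expectation (daily_growth \<delta> dI v K j))"
    by (rule indep_vars_lebesgue_integral) (auto intro: indep_vars_subset[OF assms(1)] assms(2))
  moreover have "infected_lin S0 I0 \<delta> dI v K k = (\<lambda>\<omega>. I0 * (\<Prod>j<k. daily_growth \<delta> dI v K j \<omega>))"
    by (simp add: fun_eq_iff infected_lin_eq_prod)
  ultimately show ?thesis by (simp add: assms(3))
qed

lemma mean_growth_pos:
  fixes K dmax vmax Ed EdI Ev :: real
  assumes "0 \<le> Ed" "EdI \<le> dmax" "dmax < 1" "0 < Ev" "Ev \<le> vmax" "K < (1 - dmax) / vmax"
  shows "0 < 1 + Ed - K * Ev - EdI"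
proof (cases "0 \<le> K")
  case True
  have "K * Ev \<le> K * vmax" using assms(5) True by (rule mult_left_mono)
  also have "\<dots> < 1 - dmax" using assms(4-6) by (simp add: pos_less_divide_eq)
  finally show ?thesis using assms(1,2) by linarith
next
  case False
  then have "K * Ev \<le> 0" using assms(4) by (simp add: mult_nonpos_nonneg)
  then show ?thesis using assms(1-3) by linarith
qed

theorem theorem2:
  fixes M :: "'a measure"
    and \<delta> dI v :: "nat \<Rightarrow> 'a \<Rightarrow> real"
    and \<delta>max dmax vmin vmax S0 I0 K :: real
  assumes P: "prob_space M"
    and rv: "\<And>k. \<delta> k \<in> borel_measurable M" "\<And>k. dI k \<in> borel_measurable M"
            "\<And>k. v k \<in> borel_measurable M"
    and indep: "prob_space.indep_vars M (\<lambda>_. borel) (joint_family \<delta> dI v) ({0, 1, 2} \<times> UNIV)"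
    and ident: "\<And>k. distr M borel (\<delta> k) = distr M borel (\<delta> 0)"
               "\<And>k. distr M borel (dI k) = distr M borel (dI 0)"
               "\<And>k. distr M borel (v k) = distr M borel (v 0)"
    and bd_delta: "\<And>k \<omega>. \<omega> \<in> space M \<Longrightarrow> 0 \<le> \<delta> k \<omega> \<and> \<delta> k \<omega> \<le> \<delta>max"
    and bd_dI: "\<And>k \<omega>. \<omega> \<in> space M \<Longrightarrow> 0 \<le> dI k \<omega> \<and> dI k \<omega> \<le> dmax"
    and bd_v: "\<And>k \<omega>. \<omega> \<in> space M \<Longrightarrow> vmin \<le> v k \<omega> \<and> v k \<omega> \<le> vmax"
    and dmax_lt: "dmax < 1"
    and vmin_pos: "0 < vmin" and vmax_le: "vmax \<le> 1"
    and supp: "\<And>k. in_support M (\<delta> k) \<delta>max" "\<And>k. in_support M (dI k) dmax"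
              "\<And>k. in_support M (v k) vmin" "\<And>k. in_support M (v k) vmax"
    and I0_pos: "0 < I0"
    and S0_gt: "I0 * \<delta>max < S0"
    and cond1: "(\<integral>\<omega>. \<delta> 0 \<omega> \<partial>M) < (1 - dmax) * (\<integral>\<omega>. v 0 \<omega> \<partial>M) / vmax"
    and K_upper: "K < (1 - dmax) / vmax"
  shows "(((\<integral>\<omega>. \<delta> 0 \<omega> \<partial>M) - (\<integral>\<omega>. dI 0 \<omega> \<partial>M)) / (\<integral>\<omega>. v 0 \<omega> \<partial>M) < K \<longrightarrow>
            ((\<lambda>k. (\<integral>\<omega>. infected_lin S0 I0 \<delta> dI v K k \<omega> \<partial>M) / I0) \<longlonglongrightarrow> 0)
          \<and> (\<forall>k. (\<integral>\<omega>. infected_lin S0 I0 \<delta> dI v K k \<omega> \<partial>M) \<le> I0))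
       \<and> (K = ((\<integral>\<omega>. \<delta> 0 \<omega> \<partial>M) - (\<integral>\<omega>. dI 0 \<omega> \<partial>M)) / (\<integral>\<omega>. v 0 \<omega> \<partial>M) \<longrightarrow>
            (\<forall>k. (\<integral>\<omega>. infected_lin S0 I0 \<delta> dI v K k \<omega> \<partial>M) = I0))"
proof -
  interpret prob_space M by (rule P)
  define a where "a = 1 + expectation (\<delta> 0) - K * expectation (v 0) - expectation (dI 0)"
  have \<delta>_bounds: "integrable M (\<delta> j)" "0 \<le> expectation (\<delta> j)" "expectation (\<delta> j) \<le> \<delta>max" for j
    using expectation_within_bounds[OF rv(1) bd_delta] by blast+
  have dI_bounds: "integrable M (dI j)" "0 \<le> expectation (dI j)" "expectation (dI j) \<le> dmax" for j
    using expectation_within_bounds[OF rv(2) bd_dI] by blast+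
  have v_bounds: "integrable M (v j)" "vmin \<le> expectation (v j)" "expectation (v j) \<le> vmax" for j
    using expectation_within_bounds[OF rv(3) bd_v] by blast+
  have growth_integrable: "integrable M (daily_growth \<delta> dI v K j)" for j
    using \<delta>_bounds(1) dI_bounds(1) v_bounds(1) by (auto simp: daily_growth_def[abs_def])
  have "expectation (daily_growth \<delta> dI v K j) = a" for j
    using integral_eq_if_distr_eq[OF rv(1) rv(1) ident(1)[of j]] \<delta>_bounds(1)
      integral_eq_if_distr_eq[OF rv(2) rv(2) ident(2)[of j]] dI_bounds(1)
      integral_eq_if_distr_eq[OF rv(3) rv(3) ident(3)[of j]] v_bounds(1)
    by (simp add: daily_growth_def[abs_def] a_def prob_space)
  then have mean_infected: "expectation (infected_lin S0 I0 \<delta> dI v K k) = I0 * a ^ k" for k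
    by (intro expectation_infected_lin indep_vars_daily_growth indep growth_integrable)
  have Ev_pos: "0 < expectation (v 0)" using v_bounds(2)[of 0] vmin_pos by linarith
  have "0 < a" unfolding a_def
    using \<delta>_bounds(2) dI_bounds(3) dmax_lt Ev_pos v_bounds(3) K_upper by (rule mean_growth_pos)
  moreover have "(expectation (\<delta> 0) - expectation (dI 0)) / expectation (v 0) < K \<longleftrightarrow> a < 1"
    and "K = (expectation (\<delta> 0) - expectation (dI 0)) / expectation (v 0) \<longleftrightarrow> a = 1"
    using Ev_pos by (auto simp: a_def field_simps)
  ultimately show ?thesis
    using I0_pos by (auto simp: mean_infected LIMSEQ_power_zero power_le_one)
qed

end
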